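(* Let $d=\mu_+-\mu_-$. For every $\epsilon\in[0,d/2]$ and every $K\in(1,B_K(\epsilon)]$, where $B_K(\epsilon)=\min\{\exp((d-2\epsilon)^2/2),\ d/\epsilon-1\}$ ($d/\epsilon:=+\infty$ if $\epsilon=0$), $$\mathbb E\big[|X-\theta^{(\epsilon)}_{\mathrm r}|\big]\;\ge\;\mathbb E\big[|X-\theta^*|\big]\;\ge\;\mathbb E\big[|X-\theta_{\mathrm f}|\big].$$ Moreover, $\theta_{\mathrm f}=\operatorname{argmin}_{\theta\in[\mu_-,\mu_+]}\mathbb E\big[|X-\theta|\big]$, i.e. the fair threshold minimizes the average distance to the decision boundary over all thresholds in $[\mu_-,\mu_+]$.
   Context: Setting (one-dimensional Gaussian mixture). Fix real numbers $\mu_-<\mu_+$ and $K>1$, and let $d=\mu_+-\mu_-$. Let $(X,Y)$ be a random pair with $\Pr(Y=1)=\Pr(Y=-1)=\tfrac12$, $X\mid Y=-1\sim\mathcal N(\mu_-,1)$, and $X\mid Y=1\sim\mathcal N(\mu_+,K^2)$; expectations are over this joint distribution. For $\theta\in\mathbb R$, $f_\theta(x)=1$ if $x>\theta$ and $f_\theta(x)=-1$ otherwise; the distance of $X$ to the decision boundary of $f_\theta$ is $|X-\theta|$. Class-conditional errors: $e_+(\theta)=\Pr(X\le\theta\mid Y=1)$, $e_-(\theta)=\Pr(X>\theta\mid Y=-1)$. Natural error: $R_{\mathrm{nat}}(\theta)=\tfrac12 e_+(\theta)+\tfrac12 e_-(\theta)$. For $\epsilon\ge0$, robust error: $R_{\mathrm{rob}}^{\epsilon}(\theta)=\tfrac12\Pr(X\le\theta+\epsilon\mid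 Y=1)+\tfrac12\Pr(X>\theta-\epsilon\mid Y=-1)$. Optimal models: $\theta^*$ minimizes $R_{\mathrm{nat}}$ over $[\mu_-,\mu_+]$; $\theta_{\mathrm f}$ is the threshold in $[\mu_-,\mu_+]$ with $e_+(\theta_{\mathrm f})=e_-(\theta_{\mathrm f})$; $\theta^{(\epsilon)}_{\mathrm r}$ minimizes $R^{\epsilon}_{\mathrm{rob}}$ over $[\mu_-,\mu_+]$. *)

theory Defs
  imports "HOL-Probability.Probability"
begin

definition cond_law :: "real \<Rightarrow> real \<Rightarrow> real measure" where
  "cond_law m s = density lborel (normal_density m s)"

(* Marginal law of X: (1/2) N(mu_-, 1) + (1/2) N(mu_+, K^2). *)
definition mix_law :: "real \<Rightarrow> real \<Rightarrow> real \<Rightarrow> real measure" where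
  "mix_law mm mp K = density lborel
     (\<lambda>x. (1/2) * normal_density mm 1 x + (1/2) * normal_density mp K x)"

(* e_+(theta) = Pr(X <= theta | Y = 1) *)
definition e_plus :: "real \<Rightarrow> real \<Rightarrow> real \<Rightarrow> real" where
  "e_plus mp K \<theta> = measure (cond_law mp K) {..\<theta>}"

(* e_-(theta) = Pr(X > theta | Y = -1) *)
definition e_minus :: "real \<Rightarrow> real \<Rightarrow> real" where
  "e_minus mm \<theta> = measure (cond_law mm 1) {\<theta><..}"

definition R_nat :: "real \<Rightarrow> real \<Rightarrow> real \<Rightarrow> real \<Rightarrow> real" where
  "R_nat mm mp K \<theta> = (1/2) * e_plus mp K \<theta> + (1/2) * e_minus mm \<theta>"

definition R_rob :: "real \<Rightarrow> real \<Rightarrow> real \<Rightarrow> real \<Rightarrow> real \<Rightarrow> real" where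
  "R_rob mm mp K \<epsilon> \<theta> =
     (1/2) * measure (cond_law mp K) {..\<theta> + \<epsilon>} + (1/2) * measure (cond_law mm 1) {\<theta> - \<epsilon><..}"

definition avg_dist :: "real \<Rightarrow> real \<Rightarrow> real \<Rightarrow> real \<Rightarrow> real" where
  "avg_dist mm mp K \<theta> = (\<integral>x. \<bar>x - \<theta>\<bar> \<partial>mix_law mm mp K)"

definition is_min_on :: "(real \<Rightarrow> real) \<Rightarrow> real set \<Rightarrow> real \<Rightarrow> bool" where
  "is_min_on f S x \<longleftrightarrow> x \<in> S \<and> (\<forall>y\<in>S. f x \<le> f y)"

definition B_K :: "real \<Rightarrow> real \<Rightarrow> real" where
  "B_K d \<epsilon> = (if \<epsilon> = 0 then exp (d\<^sup>2 / 2)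
                 else min (exp ((d - 2 * \<epsilon>)\<^sup>2 / 2)) (d / \<epsilon> - 1))"

end

theory Submission
  imports Defs
begin

text \<open>
  The marginal law of \<open>X\<close> has a strictly increasing cdf \<open>F = (1 + e\<^sub>+ - e\<^sub>-) / 2\<close>, and
  \<open>E|X - \<theta>|\<close> is strictly increasing where \<open>F \<ge> 1/2\<close> and strictly decreasing where
  \<open>F \<le> 1/2\<close>. Hence it is uniquely minimised at the median of \<open>X\<close>, which is \<open>\<theta>\<^sub>f\<close>, and the
  theorem reduces to \<open>\<theta>\<^sub>f < \<theta>\<^sup>* \<le> \<theta>\<^sub>r\<close>.

  The derivative of \<open>R\<^sub>n\<^sub>a\<^sub>t\<close> has the sign of the log-ratio \<open>h\<close> of the two class densities, a
  quadratic that is convex because \<open>K > 1\<close>. It is negative at \<open>\<mu>\<^sub>-\<close>, and \<open>K \<le> exp (d\<^sup>2/2)\<close>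
  makes it non-negative at \<open>\<mu>\<^sub>+\<close>, so \<open>\<theta>\<^sup>*\<close> is the unique zero \<open>c\<close> of \<open>h\<close> in \<open>(\<mu>\<^sub>-, \<mu>\<^sub>+]\<close>. Equality
  of the densities at \<open>c\<close> forces \<open>(\<mu>\<^sub>+ - c)/K < c - \<mu>\<^sub>-\<close>, i.e. \<open>e\<^sub>-(c) < e\<^sub>+(c)\<close>, whence
  \<open>\<theta>\<^sub>f < c\<close>. Finally \<open>R\<^sub>r\<^sub>o\<^sub>b\<^sup>\<epsilon>\<close> is \<open>R\<^sub>n\<^sub>a\<^sub>t\<close> with both means moved \<open>\<epsilon>\<close> inwards; the bound
  \<open>\<epsilon> (K + 1) \<le> d\<close> keeps the shifted log-ratio negative at \<open>\<mu>\<^sub>-\<close> and non-positive at \<open>c\<close>, so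
  \<open>R\<^sub>r\<^sub>o\<^sub>b\<^sup>\<epsilon>\<close> decreases on \<open>[\<mu>\<^sub>-, c]\<close> and \<open>\<theta>\<^sub>r \<ge> c\<close>.
\<close>

section \<open>Normal laws\<close>

lemma continuous_on_normal_density: "0 < s \<Longrightarrow> continuous_on A (normal_density m s)"
  unfolding normal_density_def by (intro continuous_intros) auto

lemma normal_density_standardize:
  "0 < s \<Longrightarrow> normal_density m s x = normal_density 0 1 ((x - m) / s) / s"
  unfolding normal_density_def by (simp add: real_sqrt_mult power_divide)

lemma real_distribution_cond_law: "0 < s \<Longrightarrow> real_distribution (cond_law m s)"
  unfolding real_distribution_def real_distribution_axioms_def cond_law_def
  by (simp add: prob_space_normal_density)

lemma measure_density_eq_integral:
  fixes f :: "'a \<Rightarrow> real"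
  assumes [measurable]: "f \<in> borel_measurable M" "A \<in> sets M" and "\<And>x. 0 \<le> f x"
  shows "measure (density M f) A = (\<integral>x. f x * indicator A x \<partial>M)"
proof -
  have "measure (density M f) A = (\<integral>x. indicator A x \<partial>density M f)"
    by simp
  also have "\<dots> = (\<integral>x. f x * indicator A x \<partial>M)"
    using assms by (subst integral_density) auto
  finally show ?thesis .
qed

lemma measure_cond_law_Ioc:
  assumes "0 < s" "a \<le> b"
  shows "measure (cond_law m s) {a<..b} = integral {a..b} (normal_density m s)"
proof -
  have "measure (cond_law m s) {a<..b} = (LINT x : {a<..b} | lborel. normal_density m s x)"
    unfolding cond_law_def set_lebesgue_integral_def
    by (subst measure_density_eq_integral) (auto simp: mult.commute)
  also have "\<dots> = (LBINT x=a..b. normal_density m s x)"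
    using assms by (simp add: interval_integral_Ioc)
  also have "\<dots> = integral {a..b} (normal_density m s)"
    using assms
    by (intro interval_integral_eq_integral borel_integrable_atLeastAtMost' continuous_on_normal_density)
  finally show ?thesis .
qed

lemma cdf_cond_law_has_real_derivative:
  assumes "0 < s"
  shows "(cdf (cond_law m s) has_real_derivative normal_density m s x) (at x)"
proof -
  interpret real_distribution "cond_law m s"
    using assms by (rule real_distribution_cond_law)
  have "((\<lambda>u. integral {x-1..u} (normal_density m s)) has_real_derivative normal_density m s x)
      (at x within {x-1..x+1})"
    using assms unfolding has_real_derivative_iff_has_vector_derivative
    by (intro integral_has_vector_derivative continuous_on_normal_density) auto
  then have "((\<lambda>u. cdf (cond_law m s) (x-1) + integral {x-1..u} (normal_density m s))
      has_real_derivative normal_density m s x) (at x)"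
    using at_within_interior[of x "{x-1..x+1}"] by (auto intro!: derivative_eq_intros)
  then show ?thesis
  proof (rule has_field_derivative_transform_within_open[where S="{x-1<..<x+1}"])
    fix u
    assume "u \<in> {x-1<..<x+1}"
    then show "cdf (cond_law m s) (x-1) + integral {x-1..u} (normal_density m s) = cdf (cond_law m s) u"
      using cdf_diff_eq[of "x-1" u] measure_cond_law_Ioc[OF assms, of "x-1" u] by simp
  qed auto
qed

lemma cdf_cond_law_has_real_derivative_chain [derivative_intros]:
  assumes "0 < s" and "(g has_real_derivative g') (at x)"
  shows "((\<lambda>x. cdf (cond_law m s) (g x)) has_real_derivative normal_density m s (g x) * g') (at x)"
  using DERIV_chain2[OF cdf_cond_law_has_real_derivative[OF assms(1)] assms(2)] .

lemma cdf_cond_law_strict_mono: "0 < s \<Longrightarrow> strict_mono (cdf (cond_law m s))"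
  by (rule strict_monoI, rule DERIV_pos_imp_increasing)
    (metis cdf_cond_law_has_real_derivative normal_density_pos)+

lemma DERIV_zero_tendsto_at_bot_imp_eq:
  fixes f :: "real \<Rightarrow> real"
  assumes "\<And>x. DERIV f x :> 0" and "(f \<longlongrightarrow> L) at_bot"
  shows "f x = L"
proof -
  have "f = (\<lambda>_. f x)"
    using DERIV_isconst_all assms(1) by blast
  then show ?thesis
    using assms(2) by (metis tendsto_const_iff trivial_limit_at_bot_linorder)
qed

abbreviation \<Phi> :: "real \<Rightarrow> real" where
  "\<Phi> \<equiv> cdf (cond_law 0 1)"

lemma cdf_cond_law_standardize:
  assumes "0 < s"
  shows "cdf (cond_law m s) x = \<Phi> ((x - m) / s)"
proof -
  interpret M: real_distribution "cond_law m s"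
    using assms by (rule real_distribution_cond_law)
  interpret Std: real_distribution "cond_law 0 1"
    by (rule real_distribution_cond_law) simp
  have "filterlim (\<lambda>x. (x - m) / s) at_bot at_bot"
    unfolding filterlim_at_bot eventually_at_bot_linorder
  proof
    fix y
    show "\<exists>N. \<forall>x\<le>N. (x - m) / s \<le> y"
      using assms by (intro exI[of _ "m + s * y"]) (auto simp: field_simps)
  qed
  let ?f = "\<lambda>x. cdf (cond_law m s) x - \<Phi> ((x - m) / s)"
  have "DERIV ?f x :> normal_density m s x - normal_density 0 1 ((x - m) / s) * (1 / s)" for x
    using assms by (auto intro!: derivative_eq_intros cdf_cond_law_has_real_derivative)
  then have "DERIV ?f x :> 0" for x
    using normal_density_standardize[OF assms] by simp
  moreover have "(?f \<longlongrightarrow> 0 - 0) at_bot"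
    by (intro tendsto_diff M.cdf_lim_at_bot filterlim_compose[OF Std.cdf_lim_at_bot]
        \<open>filterlim _ at_bot at_bot\<close>)
  ultimately have "?f x = 0 - 0"
    by (rule DERIV_zero_tendsto_at_bot_imp_eq)
  then show ?thesis
    by simp
qed

lemma std_normal_cdf_minus: "\<Phi> (- u) = 1 - \<Phi> u"
proof -
  interpret Std: real_distribution "cond_law 0 1"
    by (rule real_distribution_cond_law) simp
  let ?f = "\<lambda>u. \<Phi> u + \<Phi> (- u)"
  have "DERIV ?f x :> 0" for x
    by (auto intro!: derivative_eq_intros cdf_cond_law_has_real_derivative simp: normal_density_def)
  moreover have "(?f \<longlongrightarrow> 0 + 1) at_bot"
    by (intro tendsto_add Std.cdf_lim_at_bot
        filterlim_compose[OF Std.cdf_lim_at_top_prob filterlim_uminus_at_top_at_bot])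
  ultimately have "?f u = 0 + 1"
    by (rule DERIV_zero_tendsto_at_bot_imp_eq)
  then show ?thesis
    by simp
qed

section \<open>Mean absolute deviation of a real distribution\<close>

context real_distribution
begin

lemma prob_greaterThan: "prob {t<..} = 1 - cdf M t"
proof -
  have "{t<..} = space M - {..t}"
    by auto
  then show ?thesis
    using prob_compl[of "{..t}"] by (simp add: cdf_def2)
qed

lemma integrable_abs_diff: "integrable M (\<lambda>x. x) \<Longrightarrow> integrable M (\<lambda>x. \<bar>x - t\<bar>)"
  by (intro integrable_abs Bochner_Integration.integrable_diff) auto

lemma mean_abs_dev_increment_ge:
  assumes "integrable M (\<lambda>x. x)" and "t1 \<le> t2"
  shows "(t2 - t1) * (cdf M t1 + cdf M ((t1 + t2) / 2) - 1)
    \<le> (\<integral>x. \<bar>x - t2\<bar> \<partial>M) - (\<integral>x. \<bar>x - t1\<bar> \<partial>M)"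
proof -
  let ?c = "(t1 + t2) / 2"
  have "(t2 - t1) * (cdf M t1 + cdf M ?c - 1) = (t2 - t1) * (prob {..t1} - prob {?c<..})"
    by (simp add: prob_greaterThan cdf_def2)
  also have "\<dots> = (\<integral>x. (t2 - t1) * (indicator {..t1} x - indicator {?c<..} x) \<partial>M)"
    by (subst integral_mult_right_zero, subst Bochner_Integration.integral_diff)
      (auto simp: less_top[symmetric])
  also have "\<dots> \<le> (\<integral>x. \<bar>x - t2\<bar> - \<bar>x - t1\<bar> \<partial>M)"
    using assms
    by (intro integral_mono Bochner_Integration.integrable_mult_right
        Bochner_Integration.integrable_diff integrable_abs_diff integrable_real_indicator)
      (auto split: split_indicator simp: less_top[symmetric])
  also have "\<dots> = (\<integral>x. \<bar>x - t2\<bar> \<partial>M) - (\<integral>x. \<bar>x - t1\<bar> \<partial>M)"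
    using assms by (intro Bochner_Integration.integral_diff integrable_abs_diff)
  finally show ?thesis .
qed

lemma mean_abs_dev_decrement_ge:
  assumes "integrable M (\<lambda>x. x)" and "t1 \<le> t2"
  shows "(t2 - t1) * (1 - cdf M t2 - cdf M ((t1 + t2) / 2))
    \<le> (\<integral>x. \<bar>x - t1\<bar> \<partial>M) - (\<integral>x. \<bar>x - t2\<bar> \<partial>M)"
proof -
  let ?c = "(t1 + t2) / 2"
  have "(t2 - t1) * (1 - cdf M t2 - cdf M ?c) = (t2 - t1) * (prob {t2<..} - prob {..?c})"
    by (simp add: prob_greaterThan cdf_def2)
  also have "\<dots> = (\<integral>x. (t2 - t1) * (indicator {t2<..} x - indicator {..?c} x) \<partial>M)"
    by (subst integral_mult_right_zero, subst Bochner_Integration.integral_diff)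
      (auto simp: less_top[symmetric])
  also have "\<dots> \<le> (\<integral>x. \<bar>x - t1\<bar> - \<bar>x - t2\<bar> \<partial>M)"
    using assms
    by (intro integral_mono Bochner_Integration.integrable_mult_right
        Bochner_Integration.integrable_diff integrable_abs_diff integrable_real_indicator)
      (auto split: split_indicator simp: less_top[symmetric])
  also have "\<dots> = (\<integral>x. \<bar>x - t1\<bar> \<partial>M) - (\<integral>x. \<bar>x - t2\<bar> \<partial>M)"
    using assms by (intro Bochner_Integration.integral_diff integrable_abs_diff)
  finally show ?thesis .
qed

lemma mean_abs_dev_strict_mono_above_median:
  assumes "integrable M (\<lambda>x. x)" "strict_mono (cdf M)" "1/2 \<le> cdf M t1" "t1 < t2"
  shows "(\<integral>x. \<bar>x - t1\<bar> \<partial>M) < (\<integral>x. \<bar>x - t2\<bar> \<partial>M)"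
proof -
  have "cdf M t1 < cdf M ((t1 + t2) / 2)"
    using assms(2,4) by (simp add: strict_mono_less)
  then have "0 < (t2 - t1) * (cdf M t1 + cdf M ((t1 + t2) / 2) - 1)"
    using assms(3,4) by simp
  then show ?thesis
    using mean_abs_dev_increment_ge[OF assms(1) less_imp_le[OF assms(4)]] by linarith
qed

lemma mean_abs_dev_strict_anti_below_median:
  assumes "integrable M (\<lambda>x. x)" "strict_mono (cdf M)" "cdf M t2 \<le> 1/2" "t1 < t2"
  shows "(\<integral>x. \<bar>x - t2\<bar> \<partial>M) < (\<integral>x. \<bar>x - t1\<bar> \<partial>M)"
proof -
  have "cdf M ((t1 + t2) / 2) < cdf M t2"
    using assms(2,4) by (simp add: strict_mono_less)
  then have "0 < (t2 - t1) * (1 - cdf M t2 - cdf M ((t1 + t2) / 2))"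
    using assms(3,4) by simp
  then show ?thesis
    using mean_abs_dev_decrement_ge[OF assms(1) less_imp_le[OF assms(4)]] by linarith
qed

lemma median_is_unique_min_mean_abs_dev:
  assumes "integrable M (\<lambda>x. x)" "strict_mono (cdf M)" "cdf M m = 1/2" "t \<noteq> m"
  shows "(\<integral>x. \<bar>x - m\<bar> \<partial>M) < (\<integral>x. \<bar>x - t\<bar> \<partial>M)"
proof (cases "m < t")
  case True
  then show ?thesis
    using assms by (intro mean_abs_dev_strict_mono_above_median) auto
next
  case False
  then show ?thesis
    using assms by (intro mean_abs_dev_strict_anti_below_median) auto
qed

end

section \<open>Class-conditional errors and the marginal law\<close>

lemma measure_cond_law_greaterThan:
  "0 < s \<Longrightarrow> measure (cond_law m s) {t<..} = 1 - cdf (cond_law m s) t"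
  by (rule real_distribution.prob_greaterThan[OF real_distribution_cond_law])

lemma e_plus_eq: "0 < K \<Longrightarrow> e_plus mp K t = \<Phi> ((t - mp) / K)"
  unfolding e_plus_def using cdf_cond_law_standardize[of K mp t] by (simp add: cdf_def2)

lemma e_minus_eq: "e_minus mm t = \<Phi> (mm - t)"
  unfolding e_minus_def
  using measure_cond_law_greaterThan[of 1 mm t] cdf_cond_law_standardize[of 1 mm t]
    std_normal_cdf_minus[of "t - mm"]
  by simp

lemma e_minus_less_e_plus:
  assumes "0 < K" "mp - t < (t - mm) * K"
  shows "e_minus mm t < e_plus mp K t"
proof -
  have "mm - t < (t - mp) / K"
    using assms by (simp add: field_simps)
  then show ?thesis
    using assms(1) cdf_cond_law_strict_mono[of 1 0]
    by (simp add: e_minus_eq e_plus_eq strict_mono_less)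
qed

lemma measure_mix_law:
  assumes "0 < K" and [measurable]: "A \<in> sets borel"
  shows "measure (mix_law mm mp K) A = measure (cond_law mm 1) A / 2 + measure (cond_law mp K) A / 2"
proof -
  have "integrable lborel (\<lambda>x. normal_density m s x * indicator A x)" if "0 < s" for m s
    using that by (intro integrable_real_mult_indicator) auto
  then have "(\<integral>x. ((1/2) * normal_density mm 1 x + (1/2) * normal_density mp K x) * indicator A x \<partial>lborel)
      = (\<integral>x. normal_density mm 1 x * indicator A x \<partial>lborel) / 2
        + (\<integral>x. normal_density mp K x * indicator A x \<partial>lborel) / 2"
    using assms by (simp add: distrib_right Bochner_Integration.integral_add)
  then show ?thesis
    unfolding mix_law_def cond_law_def
    by (subst (1 2 3) measure_density_eq_integral) auto
qed

lemma real_distribution_mix_law: "0 < K \<Longrightarrow> real_distribution (mix_law mm mp K)"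
  unfolding real_distribution_def real_distribution_axioms_def mix_law_def
  by (auto intro!: prob_spaceI simp: emeasure_density nn_integral_eq_integral simp del: ennreal_plus)

lemma integrable_mix_law_ident: "0 < K \<Longrightarrow> integrable (mix_law mm mp K) (\<lambda>x. x)"
  unfolding mix_law_def
  by (subst integrable_density)
    (auto simp: distrib_right intro!: Bochner_Integration.integrable_add integrable_normal_moment_nz_1)

lemma cdf_mix_law: "0 < K \<Longrightarrow> cdf (mix_law mm mp K) t = (1 + e_plus mp K t - e_minus mm t) / 2"
  using measure_mix_law[of K "{..t}" mm mp] measure_cond_law_greaterThan[of 1 mm t]
  by (simp add: e_plus_def e_minus_def cdf_def2)

lemma strict_mono_cdf_mix_law:
  assumes "0 < K"
  shows "strict_mono (cdf (mix_law mm mp K))"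
proof (rule strict_monoI)
  fix x y :: real
  assume "x < y"
  then have "e_plus mp K x < e_plus mp K y" and "e_minus mm y < e_minus mm x"
    using assms cdf_cond_law_strict_mono[of K mp] cdf_cond_law_strict_mono[of 1 mm]
    by (simp_all add: e_plus_def e_minus_def measure_cond_law_greaterThan strict_mono_def
        flip: cdf_def2)
  then show "cdf (mix_law mm mp K) x < cdf (mix_law mm mp K) y"
    using assms by (simp add: cdf_mix_law)
qed

section \<open>Minimisers of the natural and robust risks\<close>

lemma convex_on_neg_before:
  fixes f :: "real \<Rightarrow> real"
  assumes "convex_on {x..y} f" "f x < 0" "f y \<le> 0" "x \<le> t" "t < y"
  shows "f t < 0"
proof -
  have "f t \<le> (f x - f y) / (y - x) * (y - t) + f y"
    using convex_onD_Icc''[OF assms(1), of t] assms(4,5) by simp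
  also have "\<dots> = (f x * (y - t) + f y * (t - x)) / (y - x)"
    using assms(4,5) by (simp add: field_simps)
  also have "\<dots> < 0"
    using assms(2-5) by (intro divide_neg_pos add_neg_nonpos mult_neg_pos mult_nonpos_nonneg) auto
  finally show ?thesis .
qed

lemma convex_on_pos_after_root:
  fixes f :: "real \<Rightarrow> real"
  assumes "convex_on {x..t} f" "f x < 0" "f c = 0" "x < c" "c < t"
  shows "0 < f t"
proof -
  have "0 \<le> (f x - f t) / (t - x) * (t - c) + f t"
    using convex_onD_Icc''[OF assms(1), of c] assms(3-5) by simp
  also have "\<dots> = (f x * (t - c) + f t * (c - x)) / (t - x)"
    using assms(4,5) by (simp add: field_simps)
  finally have "0 \<le> f x * (t - c) + f t * (c - x)"
    using assms(4,5) by (simp add: zero_le_divide_iff)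
  moreover have "f x * (t - c) < 0"
    using assms(2,5) by (simp add: mult_neg_pos)
  ultimately have "0 < f t * (c - x)"
    by linarith
  then show ?thesis
    using assms(4) by (simp add: zero_less_mult_iff)
qed

lemma R_rob_eq_R_nat_shift: "0 < K \<Longrightarrow> R_rob mm mp K \<epsilon> t = R_nat (mm + \<epsilon>) (mp - \<epsilon>) K t"
  unfolding R_rob_def R_nat_def
  using e_plus_eq[of K mp "t + \<epsilon>"] e_plus_eq[of K "mp - \<epsilon>" t]
    e_minus_eq[of mm "t - \<epsilon>"] e_minus_eq[of "mm + \<epsilon>" t]
  by (simp add: e_plus_def e_minus_def algebra_simps)

lemma R_nat_has_real_derivative:
  assumes "0 < K"
  shows "DERIV (R_nat a b K) t :> (normal_density b K t - normal_density a 1 t) / 2"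
proof -
  have "R_nat a b K = (\<lambda>t. (cdf (cond_law b K) t + 1 - cdf (cond_law a 1) t) / 2)"
    using assms
    by (auto simp: R_nat_def e_plus_def e_minus_def measure_cond_law_greaterThan cdf_def2)
  then show ?thesis
    using assms by (auto intro!: derivative_eq_intros cdf_cond_law_has_real_derivative)
qed

definition log_density_ratio :: "real \<Rightarrow> real \<Rightarrow> real \<Rightarrow> real \<Rightarrow> real" where
  "log_density_ratio a b K t = ln (normal_density b K t) - ln (normal_density a 1 t)"

lemma log_density_ratio_eq:
  assumes "0 < K"
  shows "log_density_ratio a b K t = (t - a)\<^sup>2 / 2 - ((t - b) / K)\<^sup>2 / 2 - ln K"
proof -
  have std: "ln (normal_density 0 1 u) = - u\<^sup>2 / 2 - ln (sqrt (2 * pi))" for u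
    by (simp add: normal_density_def ln_div)
  have "ln (normal_density b K t) = ln (normal_density 0 1 ((t - b) / K)) - ln K"
    using assms normal_density_pos[of 1 0 "(t - b) / K"]
    by (simp add: normal_density_standardize[OF assms] ln_div)
  moreover have "ln (normal_density a 1 t) = ln (normal_density 0 1 (t - a))"
    using normal_density_standardize[of 1 a t] by simp
  ultimately show ?thesis
    unfolding log_density_ratio_def std by simp
qed

lemma log_density_ratio_neg_iff:
  "0 < K \<Longrightarrow> log_density_ratio a b K t < 0 \<longleftrightarrow> normal_density b K t < normal_density a 1 t"
  by (simp add: log_density_ratio_def normal_density_pos)

lemma log_density_ratio_pos_iff:
  "0 < K \<Longrightarrow> 0 < log_density_ratio a b K t \<longleftrightarrow> normal_density a 1 t < normal_density b K t"
  by (simp add: log_density_ratio_def normal_density_pos)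

lemma convex_on_log_density_ratio:
  assumes "1 \<le> K"
  shows "convex_on UNIV (log_density_ratio a b K)"
proof (rule f''_ge0_imp_convex)
  fix t :: real
  have "log_density_ratio a b K = (\<lambda>t. (t - a)\<^sup>2 / 2 - ((t - b) / K)\<^sup>2 / 2 - ln K)"
    using assms by (auto simp: log_density_ratio_eq)
  moreover have "K \<noteq> 0"
    using assms by simp
  ultimately show "DERIV (log_density_ratio a b K) t :> (t - a) - (t - b) / K / K"
    by (auto intro!: derivative_eq_intros simp: power2_eq_square field_simps)
  show "DERIV (\<lambda>t. (t - a) - (t - b) / K / K) t :> 1 - 1 / K / K"
    using assms by (auto intro!: derivative_eq_intros)
  show "0 \<le> 1 - 1 / K / K"
    using assms mult_mono[of 1 K 1 K] by (simp add: field_simps)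
qed auto

lemma convex_on_Icc_log_density_ratio: "1 \<le> K \<Longrightarrow> convex_on {x..y} (log_density_ratio a b K)"
  by (rule convex_on_subset[OF convex_on_log_density_ratio]) auto

lemma R_nat_strict_anti:
  assumes "0 < K" "x < y" "\<And>t. x < t \<Longrightarrow> t < y \<Longrightarrow> log_density_ratio a b K t < 0"
  shows "R_nat a b K y < R_nat a b K x"
proof (rule DERIV_neg_imp_decreasing_open[OF assms(2)])
  fix t
  assume "x < t" "t < y"
  then show "\<exists>D. DERIV (R_nat a b K) t :> D \<and> D < 0"
    using assms R_nat_has_real_derivative log_density_ratio_neg_iff by fastforce
next
  show "continuous_on {x..y} (R_nat a b K)"
    using R_nat_has_real_derivative[OF assms(1)]
    by (meson DERIV_isCont continuous_at_imp_continuous_on)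
qed

lemma R_nat_strict_mono:
  assumes "0 < K" "x < y" "\<And>t. x < t \<Longrightarrow> t < y \<Longrightarrow> 0 < log_density_ratio a b K t"
  shows "R_nat a b K x < R_nat a b K y"
proof (rule DERIV_pos_imp_increasing_open[OF assms(2)])
  fix t
  assume "x < t" "t < y"
  then show "\<exists>D. DERIV (R_nat a b K) t :> D \<and> 0 < D"
    using assms R_nat_has_real_derivative log_density_ratio_pos_iff by fastforce
next
  show "continuous_on {x..y} (R_nat a b K)"
    using R_nat_has_real_derivative[OF assms(1)]
    by (meson DERIV_isCont continuous_at_imp_continuous_on)
qed

lemma is_min_on_R_nat_ge_root:
  assumes "1 \<le> K" "lo < c" "c \<le> hi"
    and "log_density_ratio a b K lo < 0" "log_density_ratio a b K c \<le> 0"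
    and "is_min_on (R_nat a b K) {lo..hi} \<theta>"
  shows "c \<le> \<theta>"
proof (rule ccontr)
  assume "\<not> c \<le> \<theta>"
  then have "\<theta> < c"
    by simp
  have "lo \<le> \<theta>" and min: "R_nat a b K \<theta> \<le> R_nat a b K c"
    using assms(2,3,6) by (auto simp: is_min_on_def)
  have "log_density_ratio a b K t < 0" if "\<theta> < t" "t < c" for t
    using convex_on_neg_before[OF convex_on_Icc_log_density_ratio[OF assms(1)] assms(4,5)]
      \<open>lo \<le> \<theta>\<close> that by simp
  then have "R_nat a b K c < R_nat a b K \<theta>"
    using assms(1) \<open>\<theta> < c\<close> by (intro R_nat_strict_anti) auto
  with min show False
    by simp
qed

lemma is_min_on_R_nat_eq_root:
  assumes "1 \<le> K" "lo < c" "c \<le> hi"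
    and "log_density_ratio a b K lo < 0" "log_density_ratio a b K c = 0"
    and "is_min_on (R_nat a b K) {lo..hi} \<theta>"
  shows "\<theta> = c"
proof (rule ccontr)
  assume "\<theta> \<noteq> c"
  moreover have "c \<le> \<theta>"
    using is_min_on_R_nat_ge_root[OF assms(1-4) _ assms(6)] assms(5) by simp
  ultimately have "c < \<theta>"
    by simp
  have min: "R_nat a b K \<theta> \<le> R_nat a b K c"
    using assms(2,3,6) by (auto simp: is_min_on_def)
  have "0 < log_density_ratio a b K t" if "c < t" for t
    using convex_on_pos_after_root[OF convex_on_Icc_log_density_ratio[OF assms(1)] assms(4,5,2)]
      that by simp
  then have "R_nat a b K c < R_nat a b K \<theta>"
    using assms(1) \<open>c < \<theta>\<close> by (intro R_nat_strict_mono) auto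
  with min show False
    by simp
qed

section \<open>The zero of the log-density ratio\<close>

lemma log_density_ratio_shift_left_neg:
  assumes "1 < K" "0 \<le> \<epsilon>" "\<epsilon> * (K + 1) \<le> b - a"
  shows "log_density_ratio (a + \<epsilon>) (b - \<epsilon>) K a < 0"
proof -
  have "\<epsilon> \<le> (b - a - \<epsilon>) / K"
    using assms by (simp add: field_simps)
  then have "\<epsilon>\<^sup>2 \<le> ((b - a - \<epsilon>) / K)\<^sup>2"
    using assms(2) by (intro power_mono) auto
  moreover have "((a - (b - \<epsilon>)) / K)\<^sup>2 = ((b - a - \<epsilon>) / K)\<^sup>2"
    by (simp add: power2_eq_square field_simps)
  then have "log_density_ratio (a + \<epsilon>) (b - \<epsilon>) K a = \<epsilon>\<^sup>2 / 2 - ((b - a - \<epsilon>) / K)\<^sup>2 / 2 - ln K"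
    using assms(1) by (simp add: log_density_ratio_eq)
  moreover have "0 < ln K"
    using assms(1) by simp
  ultimately show ?thesis
    by linarith
qed

lemma log_density_ratio_root_exists:
  assumes "1 < K" "a < b" "ln K \<le> (b - a)\<^sup>2 / 2"
  shows "\<exists>c. a < c \<and> c \<le> b \<and> log_density_ratio a b K c = 0"
proof -
  have left: "log_density_ratio a b K a < 0"
    using log_density_ratio_shift_left_neg[of K 0 b a] assms by simp
  moreover have "0 \<le> log_density_ratio a b K b"
    using assms by (simp add: log_density_ratio_eq)
  moreover have "log_density_ratio a b K = (\<lambda>t. (t - a)\<^sup>2 / 2 - ((t - b) / K)\<^sup>2 / 2 - ln K)"
    using assms(1) by (auto simp: log_density_ratio_eq)
  then have "continuous_on {a..b} (log_density_ratio a b K)"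
    using assms(1) by (auto intro!: continuous_intros)
  ultimately obtain c where c: "a \<le> c" "c \<le> b" "log_density_ratio a b K c = 0"
    using IVT'[of "log_density_ratio a b K" a 0 b] assms(2) by auto
  with left have "a < c"
    by (cases "a = c") auto
  with c show ?thesis
    by blast
qed

lemma log_density_ratio_root_gap:
  assumes "1 < K" "a < c" "log_density_ratio a b K c = 0"
  shows "b - c < (c - a) * K"
proof -
  have "(c - a)\<^sup>2 / 2 - ((c - b) / K)\<^sup>2 / 2 = ln K"
    using assms by (simp add: log_density_ratio_eq)
  moreover have "((c - b) / K)\<^sup>2 = ((b - c) / K)\<^sup>2"
    by (metis minus_diff_eq minus_divide_left power2_minus)
  ultimately have "((b - c) / K)\<^sup>2 < (c - a)\<^sup>2"
    using ln_gt_zero[OF assms(1)] by linarith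
  then have "(b - c) / K < c - a"
    by (rule power2_less_imp_less) (use assms(2) in simp)
  then have "(b - c) / K * K < (c - a) * K"
    using assms(1) by (intro mult_strict_right_mono) auto
  then show ?thesis
    using assms(1) by simp
qed

lemma log_density_ratio_shift_at_root_nonpos:
  assumes "1 < K" "0 \<le> \<epsilon>" "\<epsilon> * (K + 1) \<le> b - a" "a < c" "log_density_ratio a b K c = 0"
  shows "log_density_ratio (a + \<epsilon>) (b - \<epsilon>) K c \<le> 0"
proof -
  define \<alpha> \<beta> where "\<alpha> = c - a" and "\<beta> = b - c"
  have "\<beta> < \<alpha> * K"
    using log_density_ratio_root_gap[OF assms(1,4,5)] by (simp add: \<alpha>_def \<beta>_def)
  then have "\<beta> * (K + 1) \<le> \<alpha> * K * (K + 1)"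
    using assms(1) by (intro mult_right_mono) auto
  moreover have "0 \<le> \<alpha> * (K - 1)\<^sup>2"
    using assms(4) by (simp add: \<alpha>_def)
  moreover have "\<epsilon> * (K + 1) * (K - 1) \<le> (\<alpha> + \<beta>) * (K - 1)"
    using assms(1,3) by (intro mult_right_mono) (auto simp: \<alpha>_def \<beta>_def)
  ultimately have key: "\<epsilon> * (K * K - 1) \<le> 2 * \<alpha> * K * K - 2 * \<beta>"
    by (simp add: algebra_simps power2_eq_square)
  have "log_density_ratio (a + \<epsilon>) (b - \<epsilon>) K c
      = log_density_ratio (a + \<epsilon>) (b - \<epsilon>) K c - log_density_ratio a b K c"
    using assms(5) by simp
  also have "\<dots> = - \<epsilon> * (2 * \<alpha> * K * K - 2 * \<beta> - \<epsilon> * (K * K - 1)) / (2 * K * K)"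
    using assms(1) by (simp add: log_density_ratio_eq \<alpha>_def \<beta>_def power2_eq_square field_simps)
  also have "\<dots> \<le> 0"
    using key assms(1,2) by (intro divide_nonpos_pos mult_nonpos_nonneg) auto
  finally show ?thesis .
qed

lemma B_K_bounds:
  assumes "0 < K" "0 \<le> \<epsilon>" "2 * \<epsilon> \<le> d" "K \<le> B_K d \<epsilon>"
  shows "\<epsilon> * (K + 1) \<le> d" and "ln K \<le> d\<^sup>2 / 2"
proof -
  have "K \<le> exp (d\<^sup>2 / 2)"
  proof (cases "\<epsilon> = 0")
    case False
    have "(d - 2 * \<epsilon>)\<^sup>2 \<le> d\<^sup>2"
      using assms(2,3) by (intro power_mono) auto
    moreover have "K \<le> exp ((d - 2 * \<epsilon>)\<^sup>2 / 2)"
      using assms(4) False by (simp add: B_K_def)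
    ultimately show ?thesis
      by (meson divide_right_mono exp_le_cancel_iff order_trans zero_le_numeral)
  qed (use assms(4) in \<open>simp add: B_K_def\<close>)
  then show "ln K \<le> d\<^sup>2 / 2"
    using ln_le_cancel_iff[of K "exp (d\<^sup>2 / 2)"] assms(1) by simp
  show "\<epsilon> * (K + 1) \<le> d"
  proof (cases "\<epsilon> = 0")
    case False
    then have "K + 1 \<le> d / \<epsilon>"
      using assms(4) by (simp add: B_K_def)
    then show ?thesis
      using assms(2) False by (simp add: le_divide_eq mult.commute)
  qed (use assms(2,3) in simp)
qed

section \<open>Average distance to the decision boundary\<close>

lemma avg_dist_strict_mono_from_fair:
  assumes "0 < K" "e_plus mp K \<theta>f = e_minus mm \<theta>f" "\<theta>f \<le> t1" "t1 < t2"
  shows "avg_dist mm mp K t1 < avg_dist mm mp K t2"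
proof -
  interpret real_distribution "mix_law mm mp K"
    using assms(1) by (rule real_distribution_mix_law)
  have "1/2 \<le> cdf (mix_law mm mp K) t1"
    using cdf_nondecreasing[OF assms(3)] assms(1,2) by (simp add: cdf_mix_law)
  then show ?thesis
    unfolding avg_dist_def using assms(1,4)
    by (intro mean_abs_dev_strict_mono_above_median integrable_mix_law_ident strict_mono_cdf_mix_law)
qed

lemma avg_dist_min_set_eq_fair:
  assumes "0 < K" "\<theta>f \<in> {mm..mp}" "e_plus mp K \<theta>f = e_minus mm \<theta>f"
  shows "{\<theta>. is_min_on (avg_dist mm mp K) {mm..mp} \<theta>} = {\<theta>f}"
proof -
  interpret real_distribution "mix_law mm mp K"
    using assms(1) by (rule real_distribution_mix_law)
  have strict: "avg_dist mm mp K \<theta>f < avg_dist mm mp K t" if "t \<noteq> \<theta>f" for t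
    unfolding avg_dist_def using that assms(1,3)
    by (intro median_is_unique_min_mean_abs_dev integrable_mix_law_ident strict_mono_cdf_mix_law)
      (auto simp: cdf_mix_law)
  then have "is_min_on (avg_dist mm mp K) {mm..mp} \<theta>f"
    using assms(2) unfolding is_min_on_def by (metis order_refl less_imp_le)
  moreover have "t = \<theta>f" if "is_min_on (avg_dist mm mp K) {mm..mp} t" for t
    using that assms(2) strict unfolding is_min_on_def by (metis not_less)
  ultimately show ?thesis
    by blast
qed

lemma fair_threshold_less_root:
  assumes "1 < K" "e_plus mp K \<theta>f = e_minus mm \<theta>f"
    and "mm < c" "log_density_ratio mm mp K c = 0"
  shows "\<theta>f < c"
proof -
  have K: "0 < K"
    using assms(1) by simp
  have "e_minus mm c < e_plus mp K c"
    using e_minus_less_e_plus[OF K log_density_ratio_root_gap[OF assms(1,3,4)]] .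
  then have "cdf (mix_law mm mp K) \<theta>f < cdf (mix_law mm mp K) c"
    using assms(2) K by (simp add: cdf_mix_law)
  then show ?thesis
    using strict_mono_cdf_mix_law[OF K] by (simp add: strict_mono_less)
qed

lemma robust_threshold_ge_root:
  assumes "1 < K" "0 \<le> \<epsilon>" "\<epsilon> * (K + 1) \<le> mp - mm"
    and "mm < c" "c \<le> mp" "log_density_ratio mm mp K c = 0"
    and "is_min_on (R_rob mm mp K \<epsilon>) {mm..mp} \<theta>r"
  shows "c \<le> \<theta>r"
proof (rule is_min_on_R_nat_ge_root[of K mm c mp "mm + \<epsilon>" "mp - \<epsilon>"])
  show "log_density_ratio (mm + \<epsilon>) (mp - \<epsilon>) K mm < 0"
    by (rule log_density_ratio_shift_left_neg[OF assms(1-3)])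
  show "log_density_ratio (mm + \<epsilon>) (mp - \<epsilon>) K c \<le> 0"
    by (rule log_density_ratio_shift_at_root_nonpos[OF assms(1-4,6)])
  have "R_rob mm mp K \<epsilon> = R_nat (mm + \<epsilon>) (mp - \<epsilon>) K"
    using R_rob_eq_R_nat_shift assms(1) by fastforce
  with assms(7) show "is_min_on (R_nat (mm + \<epsilon>) (mp - \<epsilon>) K) {mm..mp} \<theta>r"
    by simp
qed (use assms in auto)

theorem theorem6p4:
  fixes mm mp K \<epsilon> \<theta>s \<theta>f \<theta>r :: real
  assumes "mm < mp" and "1 < K"
    and "0 \<le> \<epsilon>" and "\<epsilon> \<le> (mp - mm) / 2"
    and "K \<le> B_K (mp - mm) \<epsilon>"
    and "is_min_on (R_nat mm mp K) {mm..mp} \<theta>s"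
    and "\<theta>f \<in> {mm..mp}" and "e_plus mp K \<theta>f = e_minus mm \<theta>f"
    and "is_min_on (R_rob mm mp K \<epsilon>) {mm..mp} \<theta>r"
  shows "avg_dist mm mp K \<theta>r \<ge> avg_dist mm mp K \<theta>s
    \<and> avg_dist mm mp K \<theta>s \<ge> avg_dist mm mp K \<theta>f
    \<and> {\<theta>. is_min_on (avg_dist mm mp K) {mm..mp} \<theta>} = {\<theta>f}"
proof -
  have K: "0 < K" "1 \<le> K"
    using assms(2) by auto
  have eps: "\<epsilon> * (K + 1) \<le> mp - mm" and lnK: "ln K \<le> (mp - mm)\<^sup>2 / 2"
    using B_K_bounds[OF K(1) assms(3) _ assms(5)] assms(4) by auto
  obtain c where c: "mm < c" "c \<le> mp" "log_density_ratio mm mp K c = 0"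
    using log_density_ratio_root_exists[OF assms(2,1) lnK] by blast
  have "\<theta>s = c"
    using is_min_on_R_nat_eq_root[OF K(2) c(1,2) _ c(3) assms(6)]
      log_density_ratio_shift_left_neg[of K 0 mp mm] assms(1,2) by simp
  moreover have "c \<le> \<theta>r"
    using robust_threshold_ge_root[OF assms(2,3) eps c assms(9)] .
  moreover have "\<theta>f < c"
    using fair_threshold_less_root[OF assms(2,8) c(1,3)] .
  moreover have "avg_dist mm mp K t1 \<le> avg_dist mm mp K t2" if "\<theta>f \<le> t1" "t1 \<le> t2" for t1 t2
    using avg_dist_strict_mono_from_fair[OF K(1) assms(8) that(1), of t2] that(2)
    by (cases "t1 = t2") auto
  ultimately show ?thesis
    using avg_dist_min_set_eq_fair[OF K(1) assms(7,8)] by auto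
qed

end
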